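(* Let $A\in\mathbb{R}^{m\times n}$, $b\in\mathbb{R}^m$, $\delta\ge0$ with $\{x:\|Ax-b\|\le\delta\}\neq\emptyset$. Run the exact penalty decomposition method described in the context with any $\epsilon>0$, $\sigma>1$, $\rho_0>0$. Then for each $k$ for which $v^k$ is generated, the subproblem $$\min_{x\in\mathbb{R}^n}\{\langle v^k,|x|\rangle:\ \|Ax-b\|\le\delta\}$$ has an optimal solution.
   Context: Exact penalty decomposition method: (S.0) Given a tolerance $\epsilon>0$ and a ratio $\sigma>1$, choose $\rho_0>0$, set $v^0=e$ (the all-ones vector in $\mathbb{R}^n$) and $k:=0$. (S.1) Choose $x^{k+1}\in\arg\min_{x\in\mathbb{R}^n}\{\langle v^k,|x|\rangle:\ \|Ax-b\|\le\delta\}$. (S.2) For each $i$, set $v^{k+1}_i=0$ if $|x^{k+1}_i|>1/\rho_k$ and $v^{k+1}_i=1$ otherwise. (S.3) If $\langle v^{k+1},|x^{k+1}|\rangle\le\epsilon$, stop; otherwise go to (S.4). (S.4) Set $\rho_{k+1}=\sigma\rho_k$, $k:=k+1$, and go to (S.1). Here $\|\cdot\|$ is the Euclidean norm and $|x|$ the componentwise absolute value. *)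

theory Defs
  imports "HOL-Analysis.Analysis"
begin

definition vabs :: "real ^ 'n \<Rightarrow> real ^ 'n" where
  "vabs x = (\<chi> i. \<bar>x $ i\<bar>)"

definition feas :: "real ^ 'n ^ 'm \<Rightarrow> real ^ 'm \<Rightarrow> real \<Rightarrow> (real ^ 'n) set" where
  "feas A b \<delta> = {x. norm (A *v x - b) \<le> \<delta>}"

definition sub_opt :: "real ^ 'n ^ 'm \<Rightarrow> real ^ 'm \<Rightarrow> real \<Rightarrow> real ^ 'n \<Rightarrow> real ^ 'n \<Rightarrow> bool" where
  "sub_opt A b \<delta> v x \<longleftrightarrow> x \<in> feas A b \<delta> \<and> (\<forall>y \<in> feas A b \<delta>. v \<bullet> vabs x \<le> v \<bullet> vabs y)"

text \<open>Sequences xs, vs, rhos are a run of the exact penalty decomposition method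
  (tolerance eps, ratio sigma, initial rho0) in which v^k has been generated:
  v^0 = e, rho_0 = rho0; for every iteration j < k, x^(j+1) solves subproblem j (S.1),
  v^(j+1) is given by (S.2); and if j+1 < k the method did not stop at (S.3) and
  rho_(j+1) = sigma rho_j (S.4).\<close>
definition epd_generated ::
  "real ^ 'n ^ 'm \<Rightarrow> real ^ 'm \<Rightarrow> real \<Rightarrow> real \<Rightarrow> real \<Rightarrow> real \<Rightarrow>
   (nat \<Rightarrow> real ^ 'n) \<Rightarrow> (nat \<Rightarrow> real ^ 'n) \<Rightarrow> (nat \<Rightarrow> real) \<Rightarrow> nat \<Rightarrow> bool" where
  "epd_generated A b \<delta> \<epsilon> \<sigma> \<rho>0 xs vs rhos k \<longleftrightarrow>
     vs 0 = (\<chi> i. 1) \<and> rhos 0 = \<rho>0 \<and>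
     (\<forall>j < k.
        sub_opt A b \<delta> (vs j) (xs (Suc j)) \<and>
        vs (Suc j) = (\<chi> i. if \<bar>xs (Suc j) $ i\<bar> > 1 / rhos j then 0 else 1) \<and>
        (Suc j < k \<longrightarrow> \<not> (vs (Suc j) \<bullet> vabs (xs (Suc j)) \<le> \<epsilon>) \<and> rhos (Suc j) = \<sigma> * rhos j))"

end

theory Submission
  imports Defs
begin

text \<open>The feasible set may be unbounded and the objective \<open>\<langle>v, |x|\<rangle>\<close> is not coercive on it
  when some weights vanish. But for \<open>v \<ge> 0\<close> the objective is the \<open>\<ell>\<^sub>1\<close> norm of the weighted
  vector \<open>v \<circ> x\<close>, so it factors through the linear map \<open>L x = (A x, v \<circ> x)\<close>. The range of \<open>L\<close>
  is a subspace, hence closed, and on it the constraint bounds the first component while a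
  sublevel set of the objective bounds the second. A continuous function attains its
  infimum on a closed set with a bounded nonempty sublevel set, and any preimage of the
  minimiser under \<open>L\<close> is optimal. Every weight vector of the method is a 0/1 vector.\<close>

lemma closed_bounded_sublevel_attains_inf:
  fixes f :: "'a::heine_borel \<Rightarrow> real"
  assumes "closed S" and "continuous_on S f" and "x0 \<in> S"
    and "bounded {x \<in> S. f x \<le> f x0}"
  shows "\<exists>x\<in>S. \<forall>y\<in>S. f x \<le> f y"
proof -
  define K where "K = {x \<in> S. f x \<le> f x0}"
  have "closed K"
    unfolding K_def using assms(2) continuous_on_const assms(1)
    by (rule continuous_on_closed_Collect_le)
  then have "compact K"
    using assms(4) by (simp add: K_def compact_eq_bounded_closed)
  moreover have "K \<noteq> {}" "continuous_on K f"
    using assms(2,3) by (auto simp: K_def intro: continuous_on_subset)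
  ultimately obtain x where "x \<in> K" and x_min: "\<forall>y\<in>K. f x \<le> f y"
    using continuous_attains_inf by blast
  have "f x \<le> f y" if "y \<in> S" for y
  proof (cases "y \<in> K")
    case True
    then show ?thesis using x_min by blast
  next
    case False
    then show ?thesis using \<open>x \<in> K\<close> that by (auto simp: K_def)
  qed
  then show ?thesis
    using \<open>x \<in> K\<close> by (auto simp: K_def)
qed

lemma inner_vabs_eq_sum_abs:
  fixes v x :: "real ^ 'n"
  assumes "\<forall>i. v $ i \<ge> 0"
  shows "v \<bullet> vabs x = (\<Sum>i\<in>UNIV. \<bar>v $ i * x $ i\<bar>)"
  using assms by (simp add: inner_vec_def vabs_def abs_mult)

lemma sub_opt_exists:
  fixes A :: "real ^ 'n ^ 'm" and b :: "real ^ 'm" and v :: "real ^ 'n"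
  assumes v_nonneg: "\<forall>i. v $ i \<ge> 0" and "feas A b \<delta> \<noteq> {}"
  shows "\<exists>x. sub_opt A b \<delta> v x"
proof -
  define L where "L x = (A *v x, (\<chi> i. v $ i * x $ i) :: real ^ 'n)" for x
  define h where "h p = (\<Sum>i\<in>UNIV. \<bar>snd p $ i\<bar>)" for p :: "(real ^ 'm) \<times> (real ^ 'n)"
  define S where "S = range L \<inter> {p. norm (fst p - b) \<le> \<delta>}"
  have objective: "v \<bullet> vabs x = h (L x)" for x
    using inner_vabs_eq_sum_abs[OF v_nonneg] by (simp add: L_def h_def)
  have L_feas: "L x \<in> S \<longleftrightarrow> x \<in> feas A b \<delta>" for x
    by (auto simp: S_def L_def feas_def)
  obtain x0 where "x0 \<in> feas A b \<delta>" using assms(2) by blast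
  have "linear L"
    unfolding L_def
    by (rule linearI) (auto simp: matrix_vector_right_distrib matrix_vector_mult_scaleR
        vec_eq_iff algebra_simps)
  then have "closed (range L)"
    by (intro closed_subspace linear_subspace_image subspace_UNIV)
  moreover have h_cont: "continuous_on T h" for T
    unfolding h_def by (intro continuous_intros)
  ultimately have "closed S"
    unfolding S_def by (intro closed_Int closed_Collect_le continuous_intros)
  have "norm p \<le> norm b + \<delta> + h (L x0)" if "p \<in> S" "h p \<le> h (L x0)" for p
  proof -
    have "norm (fst p) \<le> norm b + \<delta>"
      using that(1) norm_triangle_ineq2[of "fst p" b] by (auto simp: S_def)
    moreover have "norm (snd p) \<le> h (L x0)"
      using that(2) norm_le_l1_cart[of "snd p"] by (simp add: h_def)
    moreover have "norm p \<le> norm (fst p) + norm (snd p)"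
      by (metis norm_Pair_le prod.collapse)
    ultimately show ?thesis by linarith
  qed
  then have "bounded {p \<in> S. h p \<le> h (L x0)}"
    unfolding bounded_iff by blast
  moreover have "L x0 \<in> S"
    using L_feas \<open>x0 \<in> feas A b \<delta>\<close> by blast
  ultimately obtain p where "p \<in> S" and p_min: "\<forall>q\<in>S. h p \<le> h q"
    using closed_bounded_sublevel_attains_inf[OF \<open>closed S\<close> h_cont] by blast
  then obtain x where "p = L x" "x \<in> feas A b \<delta>"
    using L_feas by (auto simp: S_def)
  then have "sub_opt A b \<delta> v x"
    using p_min L_feas objective by (auto simp: sub_opt_def)
  then show ?thesis ..
qed

lemma epd_generated_weight_01:
  assumes "epd_generated A b \<delta> \<epsilon> \<sigma> \<rho>0 xs vs rhos k"
  shows "vs k $ i \<in> {0, 1}"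
proof (cases k)
  case 0
  then show ?thesis using assms by (simp add: epd_generated_def)
next
  case (Suc j)
  with assms have "vs k = (\<chi> i. if \<bar>xs k $ i\<bar> > 1 / rhos j then 0 else 1)"
    unfolding epd_generated_def by blast
  then show ?thesis by simp
qed

theorem lemma3p3:
  fixes A :: "real ^ 'n ^ 'm" and b :: "real ^ 'm" and \<delta> \<epsilon> \<sigma> \<rho>0 :: real
    and xs vs :: "nat \<Rightarrow> real ^ 'n" and rhos :: "nat \<Rightarrow> real" and k :: nat
  assumes "\<delta> \<ge> 0" and "feas A b \<delta> \<noteq> {}"
    and "\<epsilon> > 0" and "\<sigma> > 1" and "\<rho>0 > 0"
    and "epd_generated A b \<delta> \<epsilon> \<sigma> \<rho>0 xs vs rhos k"
  shows "\<exists>x. sub_opt A b \<delta> (vs k) x"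
proof -
  have "vs k $ i \<ge> 0" for i
    using epd_generated_weight_01[OF assms(6), of i] by (elim insertE) simp_all
  then show ?thesis
    using sub_opt_exists assms(2) by blast
qed

end
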